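(* Let $(m,n)$ be bi-dimensions with $m>1$, $m\le\binom n2$, and $(m,n)\notin\{(2,4),(3,4)\}$. Then a generic real algebra $\mathfrak n\in N(m,n)$ is not of pseudo $H$-type (in particular, for $m>2$ generic rigid algebras in $N(m,n)$ are not of pseudo $H$-type).
   Context: For a real vector space $\mathfrak n_{-1}$ of dimension $n$ and $0\le m\le\binom n2$, $N(m,n)$ denotes the space of graded 2-step nilpotent Lie algebra structures $\mathfrak n=\mathfrak n_{-2}\oplus\mathfrak n_{-1}$ with $\dim\mathfrak n_{-2}=m$, bracket $\Lambda^2\mathfrak n_{-1}\to\mathfrak n_{-2}$ surjective and $\mathfrak n_{-2}$ central; it is identified with the Grassmannian $\operatorname{Gr}_d(\Lambda^2\mathfrak n_{-1})$, $d=\binom n2-m$, via the kernel $Z$ of the bracket. "Generic" means for $Z$ in a nonempty Zariski open subset. An algebra $\mathfrak n$ is of pseudo $H$-type if there is a non-degenerate symmetric bilinear form $\langle\cdot,\cdot\rangle$ on $\mathfrak n$, non-degenerate on $\mathfrak n_{-2}$, with $\mathfrak n_{-2}\perp\mathfrak n_{-1}$, such that the $J$-map defined by $\langle J_zx,y\rangle=\langle z,[x,y]\rangle$ ($x,y\in\mathfrak n_{-1}$, $z\in\mathfrak n_{-2}$) satisfies $J_zJ_w+J_wJ_z=-2\langle z,w\rangle\mathrm{Id}_{\mathfrak n_{-1}}$ for all $z,w\in\mathfrak n_{-2}$. An algebra is rigid if its Tanaka prolongation (the maximal graded Lie algebra $\bigoplus_{i\ge-2}\hat{\mathfrak n}_i$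 with negative part $\mathfrak n$ such that for $k\ge0$ any $X\in\hat{\mathfrak n}_k$ with $[X,\mathfrak n_{-1}]=0$ is zero) is finite dimensional. *)

theory Defs
  imports Complex_Main
begin

text \<open>
  We take the basis f_0,...,f_(m-1) of n_(-2) and e_0,...,e_(n-1)
  of n_(-1), and model an element of n = n_(-2) + n_(-1) as a coordinate
  function u :: nat => real supported on indices < m+n: coordinate k < m is the
  f_k-coordinate, coordinate m+i (i < n) is the e_i-coordinate.
\<close>

definition vecs :: "nat \<Rightarrow> (nat \<Rightarrow> real) set" where
  "vecs N = {u. \<forall>i\<ge>N. u i = 0}"

definition part2 :: "nat \<Rightarrow> nat \<Rightarrow> (nat \<Rightarrow> real) set" where
  "part2 m n = vecs m"

definition part1 :: "nat \<Rightarrow> nat \<Rightarrow> (nat \<Rightarrow> real) set" where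
  "part1 m n = {u \<in> vecs (m + n). \<forall>i<m. u i = 0}"

definition bil :: "(nat \<Rightarrow> nat \<Rightarrow> real) \<Rightarrow> nat \<Rightarrow> (nat \<Rightarrow> real) \<Rightarrow> (nat \<Rightarrow> real) \<Rightarrow> real" where
  "bil g N u v = (\<Sum>i<N. \<Sum>j<N. u i * g i j * v j)"

text \<open>
  Structure constants: a (i,j,k), for i < j < n and k < m, is the f_k-coefficient
  of [e_i, e_j]; i.e. a records the linear map Lambda^2 n_(-1) -> n_(-2) in the
  basis e_i /\ e_j (i<j).  Other entries of a are irrelevant.
\<close>
definition br :: "nat \<Rightarrow> nat \<Rightarrow> (nat \<times> nat \<times> nat \<Rightarrow> real) \<Rightarrow>
    (nat \<Rightarrow> real) \<Rightarrow> (nat \<Rightarrow> real) \<Rightarrow> (nat \<Rightarrow> real)" where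
  "br m n a u v = (\<lambda>k. if k < m then
      (\<Sum>j<n. \<Sum>i<j. a (i, j, k) * (u (m + i) * v (m + j) - u (m + j) * v (m + i)))
    else 0)"

definition bracket_surj :: "nat \<Rightarrow> nat \<Rightarrow> (nat \<times> nat \<times> nat \<Rightarrow> real) \<Rightarrow> bool" where
  "bracket_surj m n a \<longleftrightarrow>
     (\<forall>w \<in> vecs m. \<exists>t :: nat \<Rightarrow> nat \<Rightarrow> real.
        \<forall>k<m. w k = (\<Sum>j<n. \<Sum>i<j. t i j * a (i, j, k)))"

definition pseudo_H_type :: "nat \<Rightarrow> nat \<Rightarrow> (nat \<times> nat \<times> nat \<Rightarrow> real) \<Rightarrow> bool" where
  "pseudo_H_type m n a \<longleftrightarrow>
     (\<exists>g :: nat \<Rightarrow> nat \<Rightarrow> real.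
        \<comment> \<open>symmetric\<close>
        (\<forall>i<m+n. \<forall>j<m+n. g i j = g j i) \<and>
        \<comment> \<open>non-degenerate on n\<close>
        (\<forall>u \<in> vecs (m + n). (\<forall>v \<in> vecs (m + n). bil g (m + n) u v = 0) \<longrightarrow> u = (\<lambda>_. 0)) \<and>
        \<comment> \<open>non-degenerate on n_(-2)\<close>
        (\<forall>u \<in> part2 m n. (\<forall>v \<in> part2 m n. bil g (m + n) u v = 0) \<longrightarrow> u = (\<lambda>_. 0)) \<and>
        \<comment> \<open>n_(-2) orthogonal to n_(-1)\<close>
        (\<forall>u \<in> part2 m n. \<forall>v \<in> part1 m n. bil g (m + n) u v = 0) \<and>
        \<comment> \<open>the J-map and the Clifford relation\<close>
        (\<exists>J :: (nat \<Rightarrow> real) \<Rightarrow> (nat \<Rightarrow> real) \<Rightarrow> (nat \<Rightarrow> real).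
           (\<forall>z \<in> part2 m n. \<forall>x \<in> part1 m n. J z x \<in> part1 m n) \<and>
           (\<forall>z \<in> part2 m n. \<forall>x \<in> part1 m n. \<forall>y \<in> part1 m n.
               bil g (m + n) (J z x) y = bil g (m + n) z (br m n a x y)) \<and>
           (\<forall>z \<in> part2 m n. \<forall>w \<in> part2 m n. \<forall>x \<in> part1 m n.
               (\<lambda>i. J z (J w x) i + J w (J z x) i) = (\<lambda>i. - 2 * bil g (m + n) z w * x i))))"

inductive poly_fun :: "'v set \<Rightarrow> (('v \<Rightarrow> real) \<Rightarrow> real) \<Rightarrow> bool" for S where
  pf_const: "poly_fun S (\<lambda>_. c)"
| pf_var: "v \<in> S \<Longrightarrow> poly_fun S (\<lambda>a. a v)"
| pf_add: "poly_fun S p \<Longrightarrow> poly_fun S q \<Longrightarrow> poly_fun S (\<lambda>a. p a + q a)"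
| pf_mult: "poly_fun S p \<Longrightarrow> poly_fun S q \<Longrightarrow> poly_fun S (\<lambda>a. p a * q a)"

definition coords :: "nat \<Rightarrow> nat \<Rightarrow> (nat \<times> nat \<times> nat) set" where
  "coords m n = {(i, j, k). i < j \<and> j < n \<and> k < m}"

text \<open>
  A property holds for a generic element of N(m,n): it holds on a nonempty
  Zariski open subset, i.e. there is a polynomial P in the structure constants,
  not identically zero, such that every algebra of N(m,n) (surjective bracket)
  with P \<noteq> 0 has the property.
\<close>
definition generic :: "nat \<Rightarrow> nat \<Rightarrow> ((nat \<times> nat \<times> nat \<Rightarrow> real) \<Rightarrow> bool) \<Rightarrow> bool" where
  "generic m n Prop \<longleftrightarrow>
     (\<exists>P. poly_fun (coords m n) P \<and> (\<exists>a. P a \<noteq> 0) \<and>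
          (\<forall>a. bracket_surj m n a \<and> P a \<noteq> 0 \<longrightarrow> Prop a))"

end

theory Submission
  imports Defs "Jordan_Normal_Form.Determinant"
begin

text \<open>
  Let \<open>\<langle>_, _\<rangle>\<close> and \<open>J\<close> make \<open>\<nn>\<close> of pseudo H-type, so \<open>J\<^sub>z\<^sup>2 = -\<langle>z, z\<rangle>\<close> and
  \<open>\<langle>J\<^sub>z x, J\<^sub>w x\<rangle> = \<langle>z, w\<rangle> \<langle>x, x\<rangle>\<close>.  The skew form \<open>\<langle>z, [_, _]\<rangle>\<close> on \<open>\<nn>\<^sub>-\<^sub>1\<close> has matrix
  \<open>T G\<close>, where \<open>T\<close> is the matrix of \<open>J\<^sub>z\<close> and \<open>G\<close> the nonsingular Gram matrix, and \<open>T T G = -\<langle>z, z\<rangle> G\<close>.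
  For odd \<open>n\<close> the skew matrix is singular, hence \<open>\<langle>z, z\<rangle> = 0\<close> for all \<open>z \<in> \<nn>\<^sub>-\<^sub>2\<close>, contradicting
  nondegeneracy.  For a non-isotropic \<open>x \<in> \<nn>\<^sub>-\<^sub>1\<close> the map \<open>z \<mapsto> J\<^sub>z x\<close> embeds \<open>\<nn>\<^sub>-\<^sub>2\<close> into
  \<open>x\<^sup>\<bottom>\<close>, so \<open>m < n\<close>.

  There remains the case of even \<open>n \<ge> 6\<close>.  Let \<open>A\<^sub>k\<close> be the skew matrix of the \<open>f\<^sub>k\<close>-component of the
  bracket on \<open>\<nn>\<^sub>-\<^sub>1\<close>, \<open>G\<close> the Gram matrix of \<open>\<nn>\<^sub>-\<^sub>1\<close> and \<open>T\<^sub>k\<close> the matrix of \<open>J\<^sub>z\<^sub>k\<close>, where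
  \<open>z\<^sub>0, z\<^sub>1\<close> are dual to \<open>f\<^sub>0, f\<^sub>1\<close>.  The Clifford relations become \<open>T\<^sub>0 G = A\<^sub>0\<close>,
  \<open>T\<^sub>0 A\<^sub>0 = -\<alpha> G\<close>, \<open>T\<^sub>1 A\<^sub>1 = -\<gamma> G\<close>, \<open>T\<^sub>0 A\<^sub>1 + T\<^sub>1 A\<^sub>0 = -2\<beta> G\<close>, and eliminating \<open>T\<^sub>0, T\<^sub>1\<close> gives
  \<open>\<alpha> A\<^sub>1 adj(A\<^sub>0) A\<^sub>1 + \<gamma> det A\<^sub>0 A\<^sub>0 = 2\<beta> det A\<^sub>0 A\<^sub>1\<close> with \<open>\<alpha> \<noteq> 0\<close>.  So a \<open>3 \<times> 3\<close> minor formed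
  from entries of \<open>A\<^sub>1 adj(A\<^sub>0) A\<^sub>1\<close>, \<open>A\<^sub>1\<close> and \<open>A\<^sub>0\<close> vanishes when \<open>det A\<^sub>0 \<noteq> 0\<close>; times \<open>det A\<^sub>0\<close>
  it is a polynomial in the structure constants, and it does not vanish on the algebra with
  \<open>[e\<^sub>2\<^sub>b, e\<^sub>2\<^sub>b\<^sub>+\<^sub>1] = f\<^sub>0 + b f\<^sub>1\<close>.
\<close>

section \<open>Matrices\<close>

lemma index_mult_mat_sum:
  "A \<in> carrier_mat n k \<Longrightarrow> B \<in> carrier_mat k p \<Longrightarrow> i < n \<Longrightarrow> j < p \<Longrightarrow>
    (A * B) $$ (i, j) = (\<Sum>l<k. A $$ (i, l) * B $$ (l, j))"
  by (auto simp: scalar_prod_def lessThan_atLeast0 intro!: sum.cong)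

lemma index_mult_mat_vec_sum:
  "A \<in> carrier_mat n k \<Longrightarrow> v \<in> carrier_vec k \<Longrightarrow> i < n \<Longrightarrow>
    (A *\<^sub>v v) $ i = (\<Sum>j<k. A $$ (i, j) * v $ j)"
  by (auto simp: scalar_prod_def lessThan_atLeast0 intro!: sum.cong)

lemma smult_mat_cancel:
  fixes Y Z :: "real mat"
  assumes "c \<noteq> 0" "Y \<in> carrier_mat n k" "Z \<in> carrier_mat n k" "c \<cdot>\<^sub>m Y = c \<cdot>\<^sub>m Z"
  shows "Y = Z"
proof (rule eq_matI)
  fix i j assume "i < dim_row Z" "j < dim_col Z"
  with assms have "c * Y $$ (i,j) = c * Z $$ (i,j)"
    by (metis carrier_matD index_smult_mat(1))
  with assms(1) show "Y $$ (i,j) = Z $$ (i,j)" by simp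
qed (use assms in auto)

lemma smult_one_mat_mult: "W \<in> carrier_mat n k \<Longrightarrow> (c \<cdot>\<^sub>m 1\<^sub>m n) * W = c \<cdot>\<^sub>m (W :: 'a :: comm_ring_1 mat)"
  by (subst mult_smult_assoc_mat[OF one_carrier_mat]) auto

lemma mult_smult_one_mat: "W \<in> carrier_mat k n \<Longrightarrow> W * (c \<cdot>\<^sub>m 1\<^sub>m n) = c \<cdot>\<^sub>m (W :: 'a :: comm_ring_1 mat)"
  by (subst mult_smult_distrib[OF _ one_carrier_mat]) auto

lemma smult_smult_mat: "a \<cdot>\<^sub>m (b \<cdot>\<^sub>m A) = (a * b) \<cdot>\<^sub>m (A :: 'a :: semigroup_mult mat)"
  by (rule eq_matI) (auto simp: mult.assoc)

lemma mult_mat_cancel_left: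
  fixes X Y Z :: "real mat"
  assumes "X \<in> carrier_mat n n" "det X \<noteq> 0" "Y \<in> carrier_mat n k" "Z \<in> carrier_mat n k"
    and "X * Y = X * Z"
  shows "Y = Z"
proof -
  have "adj_mat X * (X * W) = det X \<cdot>\<^sub>m W" if "W \<in> carrier_mat n k" for W
  proof -
    have "adj_mat X * (X * W) = (adj_mat X * X) * W"
      using that assms(1) adj_mat(1)[OF assms(1)] by simp
    also have "\<dots> = det X \<cdot>\<^sub>m W"
      using that by (simp add: adj_mat(3)[OF assms(1)] smult_one_mat_mult)
    finally show ?thesis .
  qed
  from this[OF assms(3)] this[OF assms(4)] assms(5) have "det X \<cdot>\<^sub>m Y = det X \<cdot>\<^sub>m Z" by simp
  then show ?thesis using smult_mat_cancel assms(2-4) by blast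
qed

lemma mult_mat_cancel_right:
  fixes X Y Z :: "real mat"
  assumes "X \<in> carrier_mat n n" "det X \<noteq> 0" "Y \<in> carrier_mat k n" "Z \<in> carrier_mat k n"
    and "Y * X = Z * X"
  shows "Y = Z"
proof -
  have "(W * X) * adj_mat X = det X \<cdot>\<^sub>m W" if "W \<in> carrier_mat k n" for W
  proof -
    have "(W * X) * adj_mat X = W * (X * adj_mat X)"
      using that assms(1) adj_mat(1)[OF assms(1)] by simp
    also have "\<dots> = det X \<cdot>\<^sub>m W"
      using that by (simp add: adj_mat(2)[OF assms(1)] mult_smult_one_mat)
    finally show ?thesis .
  qed
  from this[OF assms(3)] this[OF assms(4)] assms(5) have "det X \<cdot>\<^sub>m Y = det X \<cdot>\<^sub>m Z" by simp
  then show ?thesis using smult_mat_cancel assms(2-4) by blast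
qed

text \<open>
  The Clifford relations in matrix form: \<open>T\<^sub>k\<close> is the matrix of \<open>J\<^sub>z\<^sub>k\<close> on \<open>\<nn>\<^sub>-\<^sub>1\<close>,
  \<open>A\<^sub>k\<close> that of the skew form \<open>\<langle>z\<^sub>k, [_, _]\<rangle>\<close> and \<open>G\<close> that of \<open>\<langle>_, _\<rangle>\<close>.
\<close>

lemma clifford_factor_invertible:
  fixes A0 G T0 :: "real mat"
  assumes carrier: "A0 \<in> carrier_mat n n" "G \<in> carrier_mat n n" "T0 \<in> carrier_mat n n"
    and "0 < n" "det A0 \<noteq> 0" "det G \<noteq> 0"
    and T0G: "T0 * G = A0" and T0A0: "T0 * A0 = (- \<alpha>) \<cdot>\<^sub>m G"
  shows "\<alpha> \<noteq> 0" and "det T0 \<noteq> 0"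
proof -
  show "\<alpha> \<noteq> 0"
  proof
    assume "\<alpha> = 0"
    then have "T0 * A0 = 0\<^sub>m n n * A0"
      unfolding T0A0 using carrier by (intro eq_matI) auto
    then have "T0 = 0\<^sub>m n n"
      by (rule mult_mat_cancel_right[OF carrier(1) \<open>det A0 \<noteq> 0\<close> carrier(3) zero_carrier_mat])
    with T0G carrier \<open>det A0 \<noteq> 0\<close> \<open>0 < n\<close> show False
      by auto
  qed
  have "det T0 * det A0 = (- \<alpha>) ^ n * det G"
    using det_mult[OF carrier(3,1)] T0A0 carrier(2) by simp
  with \<open>\<alpha> \<noteq> 0\<close> \<open>det G \<noteq> 0\<close> show "det T0 \<noteq> 0"
    by auto
qed

lemma clifford_adjugate_relation_mult:
  fixes A0 A1 G T0 T1 :: "real mat"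
  assumes carrier: "A0 \<in> carrier_mat n n" "A1 \<in> carrier_mat n n" "G \<in> carrier_mat n n"
      "T0 \<in> carrier_mat n n" "T1 \<in> carrier_mat n n"
    and T0A0: "T0 * A0 = (- \<alpha>) \<cdot>\<^sub>m G" and T1A1: "T1 * A1 = (- \<gamma>) \<cdot>\<^sub>m G"
    and anticomm: "T0 * A1 + T1 * A0 = (- 2 * \<beta>) \<cdot>\<^sub>m G"
  shows "T0 * (\<alpha> \<cdot>\<^sub>m (A1 * adj_mat A0 * A1) + (\<gamma> * det A0) \<cdot>\<^sub>m A0) = T0 * ((2 * \<beta> * det A0) \<cdot>\<^sub>m A1)"
proof -
  define d D where "d = det A0" and "D = adj_mat A0"
  note [simp] = carrier carrier[THEN carrier_matD(1)] carrier[THEN carrier_matD(2)]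
    mult_carrier_mat[of _ n n _ n] assoc_mult_mat[of _ n n _ n _ n]
    mult_smult_distrib[of _ n n _ n] mult_smult_assoc_mat[of _ n n _ n] smult_smult_mat
  have [simp]: "D \<in> carrier_mat n n" and "A0 * D = d \<cdot>\<^sub>m 1\<^sub>m n"
    using adj_mat[OF carrier(1)] by (simp_all add: d_def D_def)
  then have A0D: "A0 * (D * X) = d \<cdot>\<^sub>m X" if "X \<in> carrier_mat n n" for X
    using assoc_mult_mat[OF carrier(1) _ that, of D] smult_one_mat_mult[OF that] by simp
  have "(T0 * A1 + T1 * A0) * (D * A1) = T0 * (A1 * (D * A1)) + T1 * (A0 * (D * A1))"
    using add_mult_distrib_mat[of "T0 * A1" n n "T1 * A0" "D * A1" n] by simp
  then have a: "T0 * (A1 * (D * A1)) + (- d * \<gamma>) \<cdot>\<^sub>m G = (- 2 * \<beta>) \<cdot>\<^sub>m (G * (D * A1))"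
    using anticomm T1A1 by (simp add: A0D)
  have "(- \<alpha>) \<cdot>\<^sub>m (G * (D * A1)) = d \<cdot>\<^sub>m (T0 * A1)"
    using arg_cong[OF T0A0, of "\<lambda>X. X * (D * A1)"] by (simp add: A0D)
  from arg_cong[OF this, of "\<lambda>X. (- 1) \<cdot>\<^sub>m X"]
  have b: "\<alpha> \<cdot>\<^sub>m (G * (D * A1)) = (- d) \<cdot>\<^sub>m (T0 * A1)"
    by simp
  have "T0 * (\<alpha> \<cdot>\<^sub>m (A1 * D * A1) + (\<gamma> * d) \<cdot>\<^sub>m A0)
      = \<alpha> \<cdot>\<^sub>m (T0 * (A1 * (D * A1))) + (\<gamma> * d) \<cdot>\<^sub>m (T0 * A0)"
    using mult_add_distrib_mat[of T0 n n "\<alpha> \<cdot>\<^sub>m (A1 * D * A1)" n "(\<gamma> * d) \<cdot>\<^sub>m A0"] by simp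
  also have "\<dots> = T0 * ((2 * \<beta> * d) \<cdot>\<^sub>m A1)"
  proof (rule eq_matI)
    fix i j assume "i < dim_row (T0 * ((2 * \<beta> * d) \<cdot>\<^sub>m A1))" "j < dim_col (T0 * ((2 * \<beta> * d) \<cdot>\<^sub>m A1))"
    then have ij: "i < n" "j < n"
      by auto
    define P Q R E where "P = (T0 * (A1 * (D * A1))) $$ (i, j)" and "Q = (G * (D * A1)) $$ (i, j)"
      and "R = (T0 * A1) $$ (i, j)" and "E = G $$ (i, j)"
    have h1: "P - d * \<gamma> * E = - 2 * \<beta> * Q" and h2: "\<alpha> * Q = - d * R"
      and h3: "(T0 * A0) $$ (i, j) = - \<alpha> * E"
      using arg_cong[OF a, of "\<lambda>X. X $$ (i, j)"] arg_cong[OF b, of "\<lambda>X. X $$ (i, j)"]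
        arg_cong[OF T0A0, of "\<lambda>X. X $$ (i, j)"] ij by (simp_all add: P_def Q_def R_def E_def)
    have "\<alpha> * P + \<gamma> * d * (T0 * A0) $$ (i, j) = \<alpha> * (P - d * \<gamma> * E)"
      using h3 by (simp add: algebra_simps)
    also have "\<dots> = - 2 * \<beta> * (\<alpha> * Q)"
      using h1 by simp
    also have "\<dots> = 2 * \<beta> * d * R"
      using h2 by simp
    finally have "\<alpha> * P + \<gamma> * d * (T0 * A0) $$ (i, j) = 2 * \<beta> * d * R" .
    then show "(\<alpha> \<cdot>\<^sub>m (T0 * (A1 * (D * A1))) + (\<gamma> * d) \<cdot>\<^sub>m (T0 * A0)) $$ (i, j)
        = (T0 * ((2 * \<beta> * d) \<cdot>\<^sub>m A1)) $$ (i, j)"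
      using ij by (simp add: P_def R_def)
  qed auto
  finally show ?thesis
    by (simp add: d_def D_def)
qed

lemma clifford_adjugate_relation:
  fixes A0 A1 G T0 T1 :: "real mat"
  assumes carrier: "A0 \<in> carrier_mat n n" "A1 \<in> carrier_mat n n" "G \<in> carrier_mat n n"
      "T0 \<in> carrier_mat n n" "T1 \<in> carrier_mat n n"
    and "0 < n" and "det A0 \<noteq> 0" and "det G \<noteq> 0"
    and "T0 * G = A0" and "T0 * A0 = (- \<alpha>) \<cdot>\<^sub>m G" and "T1 * A1 = (- \<gamma>) \<cdot>\<^sub>m G"
    and "T0 * A1 + T1 * A0 = (- 2 * \<beta>) \<cdot>\<^sub>m G"
  shows "\<alpha> \<noteq> 0"
    and "\<alpha> \<cdot>\<^sub>m (A1 * adj_mat A0 * A1) + (\<gamma> * det A0) \<cdot>\<^sub>m A0 = (2 * \<beta> * det A0) \<cdot>\<^sub>m A1"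
proof -
  show "\<alpha> \<noteq> 0"
    using clifford_factor_invertible(1)[OF carrier(1,3,4) assms(6-10)] .
  have "det T0 \<noteq> 0"
    using clifford_factor_invertible(2)[OF carrier(1,3,4) assms(6-10)] .
  moreover have "A1 * adj_mat A0 * A1 \<in> carrier_mat n n"
    using carrier adj_mat(1)[OF carrier(1)] by (metis mult_carrier_mat)
  ultimately show "\<alpha> \<cdot>\<^sub>m (A1 * adj_mat A0 * A1) + (\<gamma> * det A0) \<cdot>\<^sub>m A0 = (2 * \<beta> * det A0) \<cdot>\<^sub>m A1"
    using mult_mat_cancel_left[OF carrier(4)] clifford_adjugate_relation_mult[OF carrier assms(10-12)]
      carrier(1,2) by (meson add_carrier_mat smult_carrier_mat)
qed

lemma det_skew_odd:
  fixes A :: "'a :: linordered_idom mat"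
  assumes "A \<in> carrier_mat n n" "transpose_mat A = (- 1) \<cdot>\<^sub>m A" "odd n"
  shows "det A = 0"
proof -
  have "det A = det (transpose_mat A)"
    using det_transpose[OF assms(1)] by simp
  also have "\<dots> = - det A"
    using assms by simp
  finally show ?thesis by simp
qed

definition det3 :: "real \<Rightarrow> real \<Rightarrow> real \<Rightarrow> real \<Rightarrow> real \<Rightarrow> real \<Rightarrow> real \<Rightarrow> real \<Rightarrow> real \<Rightarrow> real" where
  "det3 a1 b1 c1 a2 b2 c2 a3 b3 c3 =
     a1 * (b2 * c3 - b3 * c2) - b1 * (a2 * c3 - a3 * c2) + c1 * (a2 * b3 - a3 * b2)"

lemma det3_eq_0_if_combination:
  assumes "\<alpha> \<noteq> 0" "\<alpha> * a1 + t * c1 = s * b1" "\<alpha> * a2 + t * c2 = s * b2" "\<alpha> * a3 + t * c3 = s * b3"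
  shows "det3 a1 b1 c1 a2 b2 c2 a3 b3 c3 = 0"
proof -
  have "\<alpha> * det3 a1 b1 c1 a2 b2 c2 a3 b3 c3
      = det3 (\<alpha> * a1) b1 c1 (\<alpha> * a2) b2 c2 (\<alpha> * a3) b3 c3"
    by (simp add: det3_def algebra_simps)
  also have "\<dots> = det3 (s * b1 - t * c1) b1 c1 (s * b2 - t * c2) b2 c2 (s * b3 - t * c3) b3 c3"
  proof -
    have "\<alpha> * a1 = s * b1 - t * c1" "\<alpha> * a2 = s * b2 - t * c2" "\<alpha> * a3 = s * b3 - t * c3"
      using assms(2-4) by linarith+
    then show ?thesis by simp
  qed
  also have "\<dots> = 0"
    by (simp add: det3_def algebra_simps)
  finally show ?thesis
    using assms(1) by simp
qed

section \<open>Polynomial functions of the structure constants\<close>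

lemma poly_fun_sum:
  "finite A \<Longrightarrow> (\<And>x. x \<in> A \<Longrightarrow> poly_fun V (f x)) \<Longrightarrow> poly_fun V (\<lambda>a. \<Sum>x\<in>A. f x a)"
  by (induction A rule: finite_induct) (auto intro: poly_fun.intros)

lemma poly_fun_prod:
  "finite A \<Longrightarrow> (\<And>x. x \<in> A \<Longrightarrow> poly_fun V (f x)) \<Longrightarrow> poly_fun V (\<lambda>a. \<Prod>x\<in>A. f x a)"
  by (induction A rule: finite_induct) (auto intro: poly_fun.intros)

lemma poly_fun_scale: "poly_fun V p \<Longrightarrow> poly_fun V (\<lambda>a. c * p a)"
  by (rule pf_mult[OF pf_const])

lemma poly_fun_diff: "poly_fun V p \<Longrightarrow> poly_fun V q \<Longrightarrow> poly_fun V (\<lambda>a. p a - q a)"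
  using pf_add[OF _ poly_fun_scale[of V q "- 1"]] by simp

definition poly_mat :: "'v set \<Rightarrow> nat \<Rightarrow> (('v \<Rightarrow> real) \<Rightarrow> real mat) \<Rightarrow> bool" where
  "poly_mat V n M \<longleftrightarrow>
     (\<forall>a. M a \<in> carrier_mat n n) \<and> (\<forall>i<n. \<forall>j<n. poly_fun V (\<lambda>a. M a $$ (i, j)))"

lemma poly_mat_carrier: "poly_mat V n M \<Longrightarrow> M a \<in> carrier_mat n n"
  by (simp add: poly_mat_def)

lemma poly_mat_mult:
  assumes "poly_mat V n M" "poly_mat V n M'"
  shows "poly_mat V n (\<lambda>a. M a * M' a)"
proof -
  note carrier = poly_mat_carrier[OF assms(1)] poly_mat_carrier[OF assms(2)]
  have "poly_fun V (\<lambda>a. (M a * M' a) $$ (i, j))" if "i < n" "j < n" for i j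
  proof -
    have "(M a * M' a) $$ (i, j) = (\<Sum>k<n. M a $$ (i, k) * M' a $$ (k, j))" for a
      using index_mult_mat_sum[OF carrier that] .
    then show ?thesis
      using assms that by (auto simp: poly_mat_def intro!: poly_fun_sum pf_mult)
  qed
  with carrier show ?thesis
    unfolding poly_mat_def by (metis mult_carrier_mat)
qed

lemma poly_fun_det:
  assumes "poly_mat V n M"
  shows "poly_fun V (\<lambda>a. det (M a))"
proof -
  have "det (M a) = (\<Sum>p \<in> {p. p permutes {0..<n}}. signof p * (\<Prod>i = 0..<n. M a $$ (i, p i)))" for a
    using det_def'[OF poly_mat_carrier[OF assms]] by simp
  moreover have "poly_fun V (\<lambda>a. \<Prod>i = 0..<n. M a $$ (i, p i))" if "p permutes {0..<n}" for p
    using assms permutes_in_image[OF that] by (intro poly_fun_prod) (auto simp: poly_mat_def)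
  ultimately show ?thesis
    by (auto intro!: poly_fun_sum poly_fun_scale simp: finite_permutations)
qed

lemma poly_mat_delete:
  assumes "poly_mat V n M" "i < n" "j < n"
  shows "poly_mat V (n - 1) (\<lambda>a. mat_delete (M a) i j)"
  unfolding poly_mat_def
proof (intro conjI allI impI)
  note carrier = poly_mat_carrier[OF assms(1)]
  show "mat_delete (M a) i j \<in> carrier_mat (n - 1) (n - 1)" for a
    using carrier[of a] by (auto simp: mat_delete_def)
  fix i' j' assume "i' < n - 1" "j' < n - 1"
  then have "mat_delete (M a) i j $$ (i', j')
      = M a $$ (if i' < i then i' else Suc i', if j' < j then j' else Suc j')" for a
    using carrier[of a] by (auto simp: mat_delete_def)
  with assms \<open>i' < n - 1\<close> \<open>j' < n - 1\<close> show "poly_fun V (\<lambda>a. mat_delete (M a) i j $$ (i', j'))"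
    by (auto simp: poly_mat_def)
qed

lemma poly_mat_adj:
  assumes "poly_mat V n M"
  shows "poly_mat V n (\<lambda>a. adj_mat (M a))"
  unfolding poly_mat_def
proof (intro conjI allI impI)
  note carrier = poly_mat_carrier[OF assms]
  show "adj_mat (M a) \<in> carrier_mat n n" for a
    using adj_mat(1)[OF carrier] .
  fix i j assume ij: "i < n" "j < n"
  then have "adj_mat (M a) $$ (i, j) = (- 1) ^ (j + i) * det (mat_delete (M a) j i)" for a
    using carrier[of a] by (auto simp: adj_mat_def cofactor_def)
  with ij show "poly_fun V (\<lambda>a. adj_mat (M a) $$ (i, j))"
    by (auto intro!: poly_fun_scale poly_fun_det poly_mat_delete assms)
qed

lemma poly_fun_det3:
  assumes "poly_fun V f1" "poly_fun V f2" "poly_fun V f3" "poly_fun V f4" "poly_fun V f5"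
    "poly_fun V f6" "poly_fun V f7" "poly_fun V f8" "poly_fun V f9"
  shows "poly_fun V (\<lambda>a. det3 (f1 a) (f2 a) (f3 a) (f4 a) (f5 a) (f6 a) (f7 a) (f8 a) (f9 a))"
  unfolding det3_def by (intro pf_add poly_fun_diff pf_mult assms)

lemma sum_lessThan_add: "(\<Sum>i<m + n. f i) = (\<Sum>i<m. f i) + (\<Sum>i<n. f (m + i))"
  for f :: "nat \<Rightarrow> 'a :: comm_monoid_add"
  by (induction n) (simp_all add: add.assoc)

text \<open>\<open>unit_fun k\<close> is the basis vector \<open>f\<^sub>k\<close> of \<open>\<nn>\<^sub>-\<^sub>2\<close> for \<open>k < m\<close>, and \<open>unit_fun (m + i)\<close> is \<open>e\<^sub>i\<close>.\<close>

definition unit_fun :: "nat \<Rightarrow> nat \<Rightarrow> real" where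
  "unit_fun k = (\<lambda>l. if l = k then 1 else 0)"

lemma sum_unit_fun_mult:
  assumes "finite A"
  shows "(\<Sum>l\<in>A. unit_fun k l * f l) = (if k \<in> A then f k else 0)"
proof -
  have "(\<Sum>l\<in>A. unit_fun k l * f l) = (\<Sum>l\<in>A. if l = k then f l else 0)"
    by (rule sum.cong) (auto simp: unit_fun_def)
  with assms show ?thesis
    by (simp add: sum.delta')
qed

lemma sum_mult_unit_fun: "finite A \<Longrightarrow> (\<Sum>l\<in>A. f l * unit_fun k l) = (if k \<in> A then f k else 0)"
  using sum_unit_fun_mult[of A k f] by (simp add: mult.commute)

lemma unit_fun_shift: "unit_fun (m + i) (m + l) = unit_fun i l"
  by (simp add: unit_fun_def)

lemma unit_fun_part1: "i < n \<Longrightarrow> unit_fun (m + i) \<in> part1 m n"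
  by (auto simp: unit_fun_def part1_def vecs_def)

lemma unit_fun_part2: "k < m \<Longrightarrow> unit_fun k \<in> part2 m n"
  by (auto simp: unit_fun_def part2_def vecs_def)

lemma part1_add: "u \<in> part1 m n \<Longrightarrow> v \<in> part1 m n \<Longrightarrow> (\<lambda>i. u i + v i) \<in> part1 m n"
  by (auto simp: part1_def vecs_def)

lemma part2_add: "u \<in> part2 m n \<Longrightarrow> v \<in> part2 m n \<Longrightarrow> (\<lambda>i. u i + v i) \<in> part2 m n"
  by (auto simp: part2_def vecs_def)

lemma sum_part1: "u \<in> part1 m n \<Longrightarrow> (\<Sum>i<m + n. u i * f i) = (\<Sum>i<n. u (m + i) * f (m + i))"
  by (simp add: sum_lessThan_add part1_def)

lemma sum_part2: "u \<in> part2 m n \<Longrightarrow> (\<Sum>i<m + n. u i * f i) = (\<Sum>i<m. u i * f i)"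
  by (simp add: sum_lessThan_add part2_def vecs_def)

lemma bil_unit_fun_right: "j < N \<Longrightarrow> bil g N u (unit_fun j) = (\<Sum>i<N. u i * g i j)"
  by (simp add: bil_def sum_mult_unit_fun)

lemma bil_unit_fun: "i < N \<Longrightarrow> j < N \<Longrightarrow> bil g N (unit_fun i) (unit_fun j) = g i j"
  by (simp add: bil_unit_fun_right sum_unit_fun_mult)

lemma bil_expand_right: "bil g N u w = (\<Sum>j<N. w j * bil g N u (unit_fun j))"
proof -
  have "(\<Sum>j<N. w j * bil g N u (unit_fun j)) = (\<Sum>j<N. \<Sum>i<N. u i * g i j * w j)"
    by (auto simp: bil_unit_fun_right sum_distrib_left mult_ac intro!: sum.cong)
  also have "\<dots> = bil g N u w"
    by (subst sum.swap) (simp add: bil_def)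
  finally show ?thesis ..
qed

lemma bil_commute: "\<forall>i<N. \<forall>j<N. g i j = g j i \<Longrightarrow> bil g N u v = bil g N v u"
  unfolding bil_def by (subst sum.swap) (auto intro!: sum.cong)

lemma bil_add_left: "bil g N (\<lambda>i. u i + v i) w = bil g N u w + bil g N v w"
  by (simp add: bil_def algebra_simps sum.distrib)

lemma bil_add_right: "bil g N w (\<lambda>i. u i + v i) = bil g N w u + bil g N w v"
  by (simp add: bil_def algebra_simps sum.distrib)

lemma bil_scale_left: "bil g N (\<lambda>i. c * u i) w = c * bil g N u w"
  by (simp add: bil_def algebra_simps sum_distrib_left)

lemma bil_scale_right: "bil g N w (\<lambda>i. c * u i) = c * bil g N w u"
  by (simp add: bil_def algebra_simps sum_distrib_left)

lemma bil_sum_left: "bil g N (\<lambda>i. \<Sum>c\<in>A. f c i) w = (\<Sum>c\<in>A. bil g N (f c) w)"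
  unfolding bil_def sum_distrib_right by (subst (2) sum.swap, subst sum.swap) simp

lemma bil_zero_left: "bil g N (\<lambda>_. 0) w = 0"
  by (simp add: bil_def)

lemma bil_zero_right: "bil g N w (\<lambda>_. 0) = 0"
  by (simp add: bil_def)

lemma part1_family_dependent:
  assumes "\<And>c. c \<le> n \<Longrightarrow> v c \<in> part1 m n"
  shows "\<exists>w. (\<exists>c\<le>n. w c \<noteq> 0) \<and> (\<forall>i. (\<Sum>c\<le>n. w c * v c i) = 0)"
proof -
  define M where "M = mat\<^sub>r (Suc n) (Suc n)
    (\<lambda>r. if r = n then 0\<^sub>v (Suc n) else vec (Suc n) (\<lambda>c. v c (m + r)))"
  have M: "M \<in> carrier_mat (Suc n) (Suc n)"
    by (simp add: M_def)
  have "det M = 0"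
    unfolding M_def by (rule det_row_0) auto
  then obtain w where w: "w \<in> carrier_vec (Suc n)" "w \<noteq> 0\<^sub>v (Suc n)" "M *\<^sub>v w = 0\<^sub>v (Suc n)"
    using det_0_iff_vec_prod_zero[OF M] by blast
  have "(\<Sum>c\<le>n. w $ c * v c i) = 0" for i
  proof (cases "m \<le> i \<and> i < m + n")
    case True
    then obtain r where r: "i = m + r" "r < n"
      by (metis le_add_diff_inverse nat_add_left_cancel_less)
    have "(M *\<^sub>v w) $ r = 0"
      using w(3) r by simp
    moreover have "(M *\<^sub>v w) $ r = (\<Sum>c\<le>n. v c (m + r) * w $ c)"
      using w(1) r by (simp add: M_def scalar_prod_def atLeast0LessThan lessThan_Suc_atMost)
    ultimately show ?thesis
      using r by (simp add: mult.commute)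
  next
    case False
    with assms show ?thesis
      by (auto simp: part1_def vecs_def intro!: sum.neutral)
  qed
  moreover have "\<exists>c\<le>n. w $ c \<noteq> 0"
  proof (rule ccontr)
    assume "\<not> (\<exists>c\<le>n. w $ c \<noteq> 0)"
    then have "w = 0\<^sub>v (Suc n)"
      using w(1) by (intro eq_vecI) (auto simp: less_Suc_eq_le)
    with w(2) show False ..
  qed
  ultimately show ?thesis
    by blast
qed

definition bracket_mat :: "nat \<Rightarrow> (nat \<times> nat \<times> nat \<Rightarrow> real) \<Rightarrow> nat \<Rightarrow> real mat" where
  "bracket_mat n a k =
     mat n n (\<lambda>(i, j). if i < j then a (i, j, k) else if j < i then - a (j, i, k) else 0)"

lemma bracket_mat_carrier: "bracket_mat n a k \<in> carrier_mat n n"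
  by (simp add: bracket_mat_def)

lemma dim_bracket_mat [simp]: "dim_row (bracket_mat n a k) = n" "dim_col (bracket_mat n a k) = n"
  by (simp_all add: bracket_mat_def)

lemma index_bracket_mat:
  "i < n \<Longrightarrow> j < n \<Longrightarrow>
    bracket_mat n a k $$ (i, j) = (if i < j then a (i, j, k) else if j < i then - a (j, i, k) else 0)"
  by (simp add: bracket_mat_def)

definition adj_sandwich :: "nat \<Rightarrow> (nat \<times> nat \<times> nat \<Rightarrow> real) \<Rightarrow> real mat" where
  "adj_sandwich n a = bracket_mat n a 1 * adj_mat (bracket_mat n a 0) * bracket_mat n a 1"

lemma adj_sandwich_carrier: "adj_sandwich n a \<in> carrier_mat n n"
  unfolding adj_sandwich_def
  using adj_mat(1)[OF bracket_mat_carrier] bracket_mat_carrier by (metis mult_carrier_mat)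

lemma br_vecs: "br m n a x y \<in> vecs m"
  by (simp add: br_def vecs_def)

lemma br_anticomm: "br m n a x y = (\<lambda>k. - br m n a y x k)"
proof
  fix k
  have "(\<Sum>j<n. \<Sum>i<j. a (i, j, k) * (x (m + i) * y (m + j) - x (m + j) * y (m + i)))
      = - (\<Sum>j<n. \<Sum>i<j. a (i, j, k) * (y (m + i) * x (m + j) - y (m + j) * x (m + i)))"
    unfolding sum_negf[symmetric] by (intro sum.cong refl) (simp add: algebra_simps)
  then show "br m n a x y k = - br m n a y x k"
    by (simp add: br_def)
qed

lemma br_self: "br m n a x x = (\<lambda>_. 0)"
proof
  fix k
  show "br m n a x x k = 0"
    using fun_cong[OF br_anticomm[of m n a x x], of k] by simp
qed

lemma br_unit_fun_right:
  assumes "k < m" "j < n"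
  shows "br m n a u (unit_fun (m + j)) k = (\<Sum>l<n. u (m + l) * bracket_mat n a k $$ (l, j))"
proof -
  let ?e = "unit_fun (m + j)"
  have inner: "(\<Sum>i<j'. a (i, j', k) * (u (m + i) * ?e (m + j') - u (m + j') * ?e (m + i)))
      = (if j' = j then (\<Sum>i<j. a (i, j, k) * u (m + i)) else 0)
        - (if j < j' then a (j, j', k) * u (m + j') else 0)" for j'
  proof -
    have "(\<Sum>i<j'. a (i, j', k) * (u (m + i) * ?e (m + j') - u (m + j') * ?e (m + i)))
        = (\<Sum>i<j'. if j' = j then a (i, j', k) * u (m + i) else 0)
          - (\<Sum>i<j'. if i = j then a (i, j', k) * u (m + j') else 0)"
      unfolding sum_subtractf[symmetric] by (intro sum.cong refl) (auto simp: unit_fun_def)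
    then show ?thesis
      by (simp add: sum.delta)
  qed
  have "br m n a u ?e k = (\<Sum>j'<n. (if j' = j then (\<Sum>i<j. a (i, j, k) * u (m + i)) else 0)
      - (if j < j' then a (j, j', k) * u (m + j') else 0))"
    unfolding br_def using assms(1) inner by simp
  also have "\<dots> = (\<Sum>i<j. a (i, j, k) * u (m + i))
      - (\<Sum>j'<n. if j < j' then a (j, j', k) * u (m + j') else 0)"
    using assms(2) by (simp add: sum_subtractf sum.delta)
  also have "(\<Sum>i<j. a (i, j, k) * u (m + i)) = (\<Sum>l<n. if l < j then a (l, j, k) * u (m + l) else 0)"
  proof -
    have "(\<Sum>l<n. if l < j then a (l, j, k) * u (m + l) else 0)
        = (\<Sum>l\<in>{..<n} \<inter> {l. l < j}. a (l, j, k) * u (m + l))"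
      by (simp add: sum.inter_restrict)
    also have "{..<n} \<inter> {l. l < j} = {..<j}"
      using assms(2) by auto
    finally show ?thesis by simp
  qed
  also have "(\<Sum>l<n. if l < j then a (l, j, k) * u (m + l) else 0)
      - (\<Sum>j'<n. if j < j' then a (j, j', k) * u (m + j') else 0)
      = (\<Sum>l<n. u (m + l) * bracket_mat n a k $$ (l, j))"
    unfolding sum_subtractf[symmetric]
    by (rule sum.cong[OF refl]) (use assms(2) in \<open>auto simp: index_bracket_mat\<close>)
  finally show ?thesis .
qed

section \<open>Pseudo H-type structures\<close>

locale pseudo_H_structure =
  fixes m n :: nat and a :: "nat \<times> nat \<times> nat \<Rightarrow> real" and g :: "nat \<Rightarrow> nat \<Rightarrow> real"
    and J :: "(nat \<Rightarrow> real) \<Rightarrow> (nat \<Rightarrow> real) \<Rightarrow> (nat \<Rightarrow> real)"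
  assumes g_sym: "\<forall>i<m + n. \<forall>j<m + n. g i j = g j i"
    and nondegenerate:
      "\<forall>u \<in> vecs (m + n). (\<forall>v \<in> vecs (m + n). bil g (m + n) u v = 0) \<longrightarrow> u = (\<lambda>_. 0)"
    and nondegenerate_centre:
      "\<forall>u \<in> part2 m n. (\<forall>v \<in> part2 m n. bil g (m + n) u v = 0) \<longrightarrow> u = (\<lambda>_. 0)"
    and centre_orth: "\<forall>u \<in> part2 m n. \<forall>v \<in> part1 m n. bil g (m + n) u v = 0"
    and J_part1: "\<forall>z \<in> part2 m n. \<forall>x \<in> part1 m n. J z x \<in> part1 m n"
    and J_adjoint: "\<forall>z \<in> part2 m n. \<forall>x \<in> part1 m n. \<forall>y \<in> part1 m n.
      bil g (m + n) (J z x) y = bil g (m + n) z (br m n a x y)"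
    and clifford: "\<forall>z \<in> part2 m n. \<forall>w \<in> part2 m n. \<forall>x \<in> part1 m n.
      (\<lambda>i. J z (J w x) i + J w (J z x) i) = (\<lambda>i. - 2 * bil g (m + n) z w * x i)"

lemma pseudo_H_typeE:
  assumes "pseudo_H_type m n a"
  obtains g J where "pseudo_H_structure m n a g J"
  using assms unfolding pseudo_H_type_def
  by (elim exE conjE) (rule that, unfold_locales; assumption)

context pseudo_H_structure
begin

abbreviation B :: "(nat \<Rightarrow> real) \<Rightarrow> (nat \<Rightarrow> real) \<Rightarrow> real" where
  "B \<equiv> bil g (m + n)"

lemma B_commute: "B u v = B v u"
  using bil_commute[OF g_sym] .

lemma B_eq_0_if_isotropic:
  assumes "B u u = 0" "B v v = 0" "B (\<lambda>i. u i + v i) (\<lambda>i. u i + v i) = 0"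
  shows "B u v = 0"
  using assms by (simp add: bil_add_left bil_add_right B_commute[of v u])

lemma part2_eq_0_if_orth_unit_funs:
  assumes "z \<in> part2 m n" "\<forall>l<m. B z (unit_fun l) = 0"
  shows "z = (\<lambda>_. 0)"
proof -
  have "B z w = 0" if "w \<in> part2 m n" for w
    using bil_expand_right[of g "m + n" z w] sum_part2[OF that] assms(2) by simp
  with assms(1) nondegenerate_centre show ?thesis
    by blast
qed

lemma part1_eq_0_if_orth_unit_funs:
  assumes "u \<in> part1 m n" "\<forall>j<n. B u (unit_fun (m + j)) = 0"
  shows "u = (\<lambda>_. 0)"
proof -
  have orth: "B u (unit_fun l) = 0" if "l < m + n" for l
  proof (cases "l < m")
    case True
    then have "B (unit_fun l) u = 0"
      using centre_orth unit_fun_part2 assms(1) by blast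
    then show ?thesis
      by (simp add: B_commute)
  next
    case False
    define j where "j = l - m"
    with False that have "l = m + j" "j < n"
      by auto
    with assms(2) show ?thesis
      by simp
  qed
  have "B u w = 0" for w
  proof -
    have "B u w = (\<Sum>j<m + n. w j * B u (unit_fun j))"
      by (rule bil_expand_right)
    also have "\<dots> = 0"
      by (intro sum.neutral) (simp add: orth)
    finally show ?thesis .
  qed
  moreover have "u \<in> vecs (m + n)"
    using assms(1) by (simp add: part1_def)
  ultimately show ?thesis
    using nondegenerate by blast
qed

lemma exists_non_isotropic_part1:
  assumes "0 < n"
  shows "\<exists>x \<in> part1 m n. B x x \<noteq> 0"
proof (rule ccontr)
  assume "\<not> ?thesis"
  then have iso: "B x x = 0" if "x \<in> part1 m n" for x
    using that by blast
  have e0: "unit_fun (m + 0) \<in> part1 m n"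
    using unit_fun_part1[OF assms] .
  have "B (unit_fun (m + 0)) (unit_fun (m + j)) = 0" if "j < n" for j
    using iso[OF e0] iso[OF unit_fun_part1[OF that]] iso[OF part1_add[OF e0 unit_fun_part1[OF that]]]
    by (rule B_eq_0_if_isotropic)
  then have "unit_fun (m + 0) = (\<lambda>_. 0)"
    using part1_eq_0_if_orth_unit_funs[OF e0] by blast
  then have "unit_fun (m + 0) m = 0"
    by simp
  then show False
    by (simp add: unit_fun_def)
qed

lemma J_square:
  assumes "z \<in> part2 m n" "x \<in> part1 m n"
  shows "J z (J z x) = (\<lambda>i. - B z z * x i)"
proof
  fix i
  have "J z (J z x) i + J z (J z x) i = - 2 * B z z * x i"
    using fun_cong[OF clifford[rule_format, OF assms(1,1,2)], of i] by (simp only:)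
  then show "J z (J z x) i = - B z z * x i"
    by linarith
qed

lemma J_skew:
  assumes "z \<in> part2 m n" "x \<in> part1 m n" "y \<in> part1 m n"
  shows "B (J z x) y = - B (J z y) x"
proof -
  have "B (J z x) y = B z (br m n a x y)"
    using J_adjoint assms by blast
  also have "\<dots> = - B z (br m n a y x)"
    by (subst br_anticomm) (simp add: bil_scale_right[of g "m + n" z "- 1", simplified])
  also have "B z (br m n a y x) = B (J z y) x"
    using J_adjoint assms by metis
  finally show ?thesis .
qed

lemma J_orth: "z \<in> part2 m n \<Longrightarrow> x \<in> part1 m n \<Longrightarrow> B (J z x) x = 0"
  using J_adjoint br_self bil_zero_right by metis

lemma B_J_J:
  assumes z: "z \<in> part2 m n" and w: "w \<in> part2 m n" and x: "x \<in> part1 m n"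
  shows "B (J z x) (J w x) = B z w * B x x"
proof -
  have Jx: "J w x \<in> part1 m n" "J z x \<in> part1 m n"
    using J_part1 z w x by auto
  have "B (J z (J w x)) x + B (J w (J z x)) x = B (\<lambda>i. J z (J w x) i + J w (J z x) i) x"
    by (rule bil_add_left[symmetric])
  also have "\<dots> = B (\<lambda>i. - 2 * B z w * x i) x"
    using clifford z w x by metis
  also have "\<dots> = - 2 * B z w * B x x"
    by (rule bil_scale_left)
  finally have "B (J z (J w x)) x + B (J w (J z x)) x = - 2 * B z w * B x x" .
  moreover have "B (J z x) (J w x) = - B (J z (J w x)) x" "B (J w x) (J z x) = - B (J w (J z x)) x"
    using J_skew[OF z x Jx(1)] J_skew[OF w x Jx(2)] .
  ultimately show ?thesis
    using B_commute[of "J w x" "J z x"] by linarith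
qed

definition gram_part1 :: "real mat" where
  "gram_part1 = mat n n (\<lambda>(i, j). g (m + i) (m + j))"

definition gram_part2 :: "real mat" where
  "gram_part2 = mat m m (\<lambda>(i, j). g i j)"

lemma gram_part1_carrier: "gram_part1 \<in> carrier_mat n n"
  by (simp add: gram_part1_def)

lemma gram_part2_carrier: "gram_part2 \<in> carrier_mat m m"
  by (simp add: gram_part2_def)

lemma B_part1_unit_fun:
  assumes "u \<in> part1 m n" "j < n"
  shows "B u (unit_fun (m + j)) = (\<Sum>l<n. u (m + l) * gram_part1 $$ (l, j))"
  using assms by (simp add: bil_unit_fun_right sum_part1 gram_part1_def)

lemma B_unit_funs_part1: "i < n \<Longrightarrow> j < n \<Longrightarrow> B (unit_fun (m + i)) (unit_fun (m + j)) = gram_part1 $$ (i, j)"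
  by (simp add: bil_unit_fun gram_part1_def)

lemma det_gram_part1_nonzero: "det gram_part1 \<noteq> 0"
proof -
  have "v = 0\<^sub>v n" if v: "v \<in> carrier_vec n" and gv: "gram_part1 *\<^sub>v v = 0\<^sub>v n" for v
  proof -
    define u where "u = (\<lambda>l. if m \<le> l \<and> l < m + n then v $ (l - m) else 0)"
    have u: "u \<in> part1 m n"
      by (auto simp: u_def part1_def vecs_def)
    have "B u (unit_fun (m + j)) = 0" if "j < n" for j
    proof -
      have "B u (unit_fun (m + j)) = (\<Sum>l<n. gram_part1 $$ (j, l) * v $ l)"
        using B_part1_unit_fun[OF u that] that g_sym by (auto simp: u_def gram_part1_def mult.commute intro!: sum.cong)
      also have "\<dots> = (gram_part1 *\<^sub>v v) $ j"
        using index_mult_mat_vec_sum[OF gram_part1_carrier v that] by simp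
      finally show ?thesis
        using gv that by simp
    qed
    then have u0: "u = (\<lambda>_. 0)"
      using part1_eq_0_if_orth_unit_funs[OF u] by blast
    have "v $ i = 0" if "i < n" for i
      using fun_cong[OF u0, of "m + i"] that by (simp add: u_def)
    then show ?thesis
      using v by (intro eq_vecI) auto
  qed
  then show ?thesis
    using det_0_iff_vec_prod_zero[OF gram_part1_carrier] by blast
qed

definition part2_of_vec :: "real vec \<Rightarrow> nat \<Rightarrow> real" where
  "part2_of_vec w = (\<lambda>l. if l < m then w $ l else 0)"

lemma part2_of_vec_part2: "part2_of_vec w \<in> part2 m n"
  by (simp add: part2_of_vec_def part2_def vecs_def)

lemma B_part2_of_vec_unit_fun:
  assumes "w \<in> carrier_vec m" "l < m"
  shows "B (part2_of_vec w) (unit_fun l) = (gram_part2 *\<^sub>v w) $ l"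
proof -
  have "B (part2_of_vec w) (unit_fun l) = (\<Sum>i<m. w $ i * g i l)"
    using assms(2) sum_part2[OF part2_of_vec_part2]
    by (simp add: bil_unit_fun_right part2_of_vec_def)
  also have "\<dots> = (\<Sum>i<m. gram_part2 $$ (l, i) * w $ i)"
    using assms(2) g_sym by (auto simp: gram_part2_def intro!: sum.cong)
  also have "\<dots> = (gram_part2 *\<^sub>v w) $ l"
    using index_mult_mat_vec_sum[OF gram_part2_carrier assms] by simp
  finally show ?thesis .
qed

lemma det_gram_part2_nonzero: "det gram_part2 \<noteq> 0"
proof -
  have "w = 0\<^sub>v m" if w: "w \<in> carrier_vec m" and gw: "gram_part2 *\<^sub>v w = 0\<^sub>v m" for w
  proof -
    have w0: "part2_of_vec w = (\<lambda>_. 0)"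
      using B_part2_of_vec_unit_fun[OF w] gw
      by (intro part2_eq_0_if_orth_unit_funs part2_of_vec_part2) simp
    have "w $ i = 0" if "i < m" for i
      using fun_cong[OF w0, of i] that by (simp add: part2_of_vec_def)
    then show ?thesis
      using w by (intro eq_vecI) auto
  qed
  then show ?thesis
    using det_0_iff_vec_prod_zero[OF gram_part2_carrier] by blast
qed

lemma exists_dual_part2_vector:
  assumes "k < m"
  shows "\<exists>z \<in> part2 m n. \<forall>v \<in> vecs m. B z v = v k"
proof -
  define w where "w = (1 / det gram_part2) \<cdot>\<^sub>v (adj_mat gram_part2 *\<^sub>v unit_vec m k)"
  have w: "w \<in> carrier_vec m"
    using adj_mat(1)[OF gram_part2_carrier] by (simp add: w_def)
  have "gram_part2 *\<^sub>v w = (1 / det gram_part2) \<cdot>\<^sub>v ((gram_part2 * adj_mat gram_part2) *\<^sub>v unit_vec m k)"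
    unfolding w_def using adj_mat(1)[OF gram_part2_carrier] gram_part2_carrier by (simp add: mult_mat_vec)
  also have "\<dots> = unit_vec m k"
    unfolding adj_mat(2)[OF gram_part2_carrier] using det_gram_part2_nonzero by (intro eq_vecI) auto
  finally have gw: "gram_part2 *\<^sub>v w = unit_vec m k" .
  have "B (part2_of_vec w) v = v k" if "v \<in> vecs m" for v
  proof -
    have "B (part2_of_vec w) v = (\<Sum>l<m + n. v l * B (part2_of_vec w) (unit_fun l))"
      by (rule bil_expand_right)
    also have "\<dots> = (\<Sum>l<m. v l * (gram_part2 *\<^sub>v w) $ l)"
      using that by (simp add: sum_part2 part2_def B_part2_of_vec_unit_fun[OF w])
    also have "\<dots> = (\<Sum>l<m. v l * unit_fun k l)"
      by (intro sum.cong) (auto simp: gw unit_fun_def unit_vec_def)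
    also have "\<dots> = v k"
      using assms by (simp add: sum_mult_unit_fun)
    finally show ?thesis .
  qed
  then show ?thesis
    using part2_of_vec_part2 by blast
qed

definition J_mat :: "(nat \<Rightarrow> real) \<Rightarrow> real mat" where
  "J_mat z = mat n n (\<lambda>(i, l). J z (unit_fun (m + i)) (m + l))"

text \<open>The matrix of the skew form \<open>(x, y) \<mapsto> \<langle>z, [x, y]\<rangle>\<close> on \<open>\<nn>\<^sub>-\<^sub>1\<close>.\<close>

definition bracket_form_mat :: "(nat \<Rightarrow> real) \<Rightarrow> real mat" where
  "bracket_form_mat z = mat n n (\<lambda>(l, j). \<Sum>k<m. B z (unit_fun k) * bracket_mat n a k $$ (l, j))"

lemma J_mat_carrier: "J_mat z \<in> carrier_mat n n"
  by (simp add: J_mat_def)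

lemma index_J_mat: "i < n \<Longrightarrow> l < n \<Longrightarrow> J_mat z $$ (i, l) = J z (unit_fun (m + i)) (m + l)"
  by (simp add: J_mat_def)

lemma bracket_form_mat_carrier: "bracket_form_mat z \<in> carrier_mat n n"
  by (simp add: bracket_form_mat_def)

lemma dim_bracket_form_mat [simp]: "dim_row (bracket_form_mat z) = n" "dim_col (bracket_form_mat z) = n"
  by (simp_all add: bracket_form_mat_def)

lemma transpose_bracket_form_mat: "transpose_mat (bracket_form_mat z) = (- 1) \<cdot>\<^sub>m bracket_form_mat z"
  by (rule eq_matI) (auto simp: bracket_form_mat_def index_bracket_mat sum_negf[symmetric] intro!: sum.cong)

lemma bracket_form_mat_dual:
  assumes dual: "\<forall>v \<in> vecs m. B z v = v k" and "k < m"
  shows "bracket_form_mat z = bracket_mat n a k"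
proof -
  have "(\<Sum>k'<m. B z (unit_fun k') * bracket_mat n a k' $$ (i, j)) = bracket_mat n a k $$ (i, j)" for i j
  proof -
    have "(\<Sum>k'<m. B z (unit_fun k') * bracket_mat n a k' $$ (i, j))
        = (\<Sum>k'<m. unit_fun k k' * bracket_mat n a k' $$ (i, j))"
      using dual by (intro sum.cong) (auto simp: vecs_def unit_fun_def)
    also have "\<dots> = bracket_mat n a k $$ (i, j)"
      using \<open>k < m\<close> by (simp add: sum_unit_fun_mult)
    finally show ?thesis .
  qed
  then show ?thesis
    by (intro eq_matI) (simp_all add: bracket_form_mat_def)
qed

lemma B_br_unit_fun_right:
  assumes "z \<in> part2 m n" "j < n"
  shows "B z (br m n a u (unit_fun (m + j))) = (\<Sum>l<n. u (m + l) * bracket_form_mat z $$ (l, j))"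
proof -
  have "B z (br m n a u (unit_fun (m + j)))
      = (\<Sum>k<m + n. br m n a u (unit_fun (m + j)) k * B z (unit_fun k))"
    by (rule bil_expand_right)
  also have "\<dots> = (\<Sum>k<m. (\<Sum>l<n. u (m + l) * bracket_mat n a k $$ (l, j)) * B z (unit_fun k))"
    using assms(2) br_vecs by (simp add: sum_part2 part2_def br_unit_fun_right)
  also have "\<dots> = (\<Sum>l<n. u (m + l) * (\<Sum>k<m. B z (unit_fun k) * bracket_mat n a k $$ (l, j)))"
    by (simp add: sum_distrib_left sum_distrib_right mult_ac sum.swap[of _ "{..<m}"])
  also have "\<dots> = (\<Sum>l<n. u (m + l) * bracket_form_mat z $$ (l, j))"
    using assms(2) by (simp add: bracket_form_mat_def)
  finally show ?thesis .
qed

lemma J_mat_mult_gram_part1: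
  assumes "z \<in> part2 m n"
  shows "J_mat z * gram_part1 = bracket_form_mat z"
proof (rule eq_matI)
  fix i j assume "i < dim_row (bracket_form_mat z)" "j < dim_col (bracket_form_mat z)"
  then have ij: "i < n" "j < n"
    by (simp_all add: bracket_form_mat_def)
  have "(J_mat z * gram_part1) $$ (i, j) = B (J z (unit_fun (m + i))) (unit_fun (m + j))"
    unfolding index_mult_mat_sum[OF J_mat_carrier gram_part1_carrier ij]
    using ij J_part1 assms unit_fun_part1[OF ij(1)] by (simp add: B_part1_unit_fun index_J_mat)
  also have "\<dots> = B z (br m n a (unit_fun (m + i)) (unit_fun (m + j)))"
    using J_adjoint assms unit_fun_part1 ij by blast
  also have "\<dots> = bracket_form_mat z $$ (i, j)"
    using ij by (simp add: B_br_unit_fun_right[OF assms] unit_fun_shift sum_unit_fun_mult)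
  finally show "(J_mat z * gram_part1) $$ (i, j) = bracket_form_mat z $$ (i, j)" .
qed (simp_all add: J_mat_def bracket_form_mat_def gram_part1_def)

lemma index_J_mat_mult_bracket_form_mat:
  assumes "w \<in> part2 m n" "z \<in> part2 m n" "i < n" "j < n"
  shows "(J_mat w * bracket_form_mat z) $$ (i, j) = B (J z (J w (unit_fun (m + i)))) (unit_fun (m + j))"
proof -
  have Jw: "J w (unit_fun (m + i)) \<in> part1 m n"
    using J_part1 assms(1) unit_fun_part1[OF assms(3)] by blast
  have "(J_mat w * bracket_form_mat z) $$ (i, j) = B z (br m n a (J w (unit_fun (m + i))) (unit_fun (m + j)))"
    unfolding index_mult_mat_sum[OF J_mat_carrier bracket_form_mat_carrier assms(3,4)]
    using assms by (simp add: B_br_unit_fun_right index_J_mat)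
  also have "\<dots> = B (J z (J w (unit_fun (m + i)))) (unit_fun (m + j))"
    using J_adjoint assms(2) Jw unit_fun_part1[OF assms(4)] by metis
  finally show ?thesis .
qed

lemma J_mat_mult_bracket_form_mat_self:
  assumes "z \<in> part2 m n"
  shows "J_mat z * bracket_form_mat z = (- B z z) \<cdot>\<^sub>m gram_part1"
proof (rule eq_matI)
  fix i j assume "i < dim_row ((- B z z) \<cdot>\<^sub>m gram_part1)" "j < dim_col ((- B z z) \<cdot>\<^sub>m gram_part1)"
  then have ij: "i < n" "j < n"
    by (simp_all add: gram_part1_def)
  have "(J_mat z * bracket_form_mat z) $$ (i, j) = B (\<lambda>l. - B z z * unit_fun (m + i) l) (unit_fun (m + j))"
    using index_J_mat_mult_bracket_form_mat[OF assms assms ij] J_square[OF assms unit_fun_part1[OF ij(1)]]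
    by (simp only:)
  also have "\<dots> = ((- B z z) \<cdot>\<^sub>m gram_part1) $$ (i, j)"
    unfolding bil_scale_left B_unit_funs_part1[OF ij] using ij gram_part1_carrier by simp
  finally show "(J_mat z * bracket_form_mat z) $$ (i, j) = ((- B z z) \<cdot>\<^sub>m gram_part1) $$ (i, j)" .
qed (simp_all add: J_mat_def gram_part1_def)

lemma J_mat_mult_bracket_form_mat_anticomm:
  assumes "z \<in> part2 m n" "w \<in> part2 m n"
  shows "J_mat z * bracket_form_mat w + J_mat w * bracket_form_mat z = (- 2 * B z w) \<cdot>\<^sub>m gram_part1"
proof (rule eq_matI)
  fix i j assume "i < dim_row ((- 2 * B z w) \<cdot>\<^sub>m gram_part1)" "j < dim_col ((- 2 * B z w) \<cdot>\<^sub>m gram_part1)"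
  then have ij: "i < n" "j < n"
    by (simp_all add: gram_part1_def)
  let ?e = "unit_fun (m + i)"
  have "(J_mat z * bracket_form_mat w + J_mat w * bracket_form_mat z) $$ (i, j)
      = B (J w (J z ?e)) (unit_fun (m + j)) + B (J z (J w ?e)) (unit_fun (m + j))"
    using ij index_J_mat_mult_bracket_form_mat[OF assms ij] index_J_mat_mult_bracket_form_mat[OF assms(2,1) ij]
    by (simp add: J_mat_def bracket_form_mat_def)
  also have "\<dots> = B (\<lambda>l. J z (J w ?e) l + J w (J z ?e) l) (unit_fun (m + j))"
    by (simp add: bil_add_left)
  also have "(\<lambda>l. J z (J w ?e) l + J w (J z ?e) l) = (\<lambda>l. - 2 * B z w * ?e l)"
    using clifford assms unit_fun_part1[OF ij(1)] by blast
  also have "B (\<lambda>l. - 2 * B z w * ?e l) (unit_fun (m + j)) = ((- 2 * B z w) \<cdot>\<^sub>m gram_part1) $$ (i, j)"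
    unfolding bil_scale_left B_unit_funs_part1[OF ij] using ij gram_part1_carrier by simp
  finally show "(J_mat z * bracket_form_mat w + J_mat w * bracket_form_mat z) $$ (i, j) = ((- 2 * B z w) \<cdot>\<^sub>m gram_part1) $$ (i, j)" .
qed (simp_all add: J_mat_def gram_part1_def)

lemma even_dim_part1:
  assumes "0 < m"
  shows "even n"
proof (rule ccontr)
  assume "odd n"
  have iso: "B z z = 0" if z: "z \<in> part2 m n" for z
  proof -
    have "det (J_mat z) * det (bracket_form_mat z) = (- B z z) ^ n * det gram_part1"
      using det_mult[OF J_mat_carrier bracket_form_mat_carrier, of z z] J_mat_mult_bracket_form_mat_self[OF z]
      by (simp add: gram_part1_def)
    moreover have "det (bracket_form_mat z) = 0"
      using bracket_form_mat_carrier transpose_bracket_form_mat \<open>odd n\<close> by (rule det_skew_odd)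
    ultimately show ?thesis
      using det_gram_part1_nonzero by simp
  qed
  have f0: "unit_fun 0 \<in> part2 m n"
    using unit_fun_part2[OF assms] .
  have "B (unit_fun 0) (unit_fun l) = 0" if "l < m" for l
    using iso[OF f0] iso[OF unit_fun_part2[OF that]] iso[OF part2_add[OF f0 unit_fun_part2[OF that]]]
    by (rule B_eq_0_if_isotropic)
  then have "unit_fun 0 = (\<lambda>_. 0)"
    using part2_eq_0_if_orth_unit_funs[OF f0] by blast
  then have "unit_fun 0 0 = 0"
    by simp
  then show False
    by (simp add: unit_fun_def)
qed

lemma J_unit_funs_independent:
  assumes x: "x \<in> part1 m n" "B x x \<noteq> 0" and "k \<le> m"
    and rel: "\<forall>i. (\<Sum>c<k. w c * J (unit_fun c) x i) + t * x i = 0"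
  shows "t = 0" and "\<forall>c<k. w c = 0"
proof -
  have B_rel: "(\<Sum>c<k. w c * B (J (unit_fun c) x) y) + t * B x y = 0" for y
  proof -
    have "(\<lambda>i. (\<Sum>c<k. w c * J (unit_fun c) x i) + t * x i) = (\<lambda>_. 0)"
      using rel by blast
    then have "0 = B (\<lambda>i. (\<Sum>c<k. w c * J (unit_fun c) x i) + t * x i) y"
      by (simp add: bil_zero_left)
    also have "\<dots> = (\<Sum>c<k. w c * B (J (unit_fun c) x) y) + t * B x y"
      by (simp add: bil_add_left bil_sum_left bil_scale_left)
    finally show ?thesis ..
  qed
  have c_part2: "c < k \<Longrightarrow> unit_fun c \<in> part2 m n" for c
    using \<open>k \<le> m\<close> unit_fun_part2 by simp
  have "B (J (unit_fun c) x) x = 0" if "c < k" for c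
    using J_orth c_part2[OF that] x(1) .
  then show "t = 0"
    using B_rel[of x] x(2) by simp
  have "B (unit_fun l) (\<lambda>i. \<Sum>c<k. w c * unit_fun c i) = 0" if "l < m" for l
  proof -
    have "(\<Sum>c<k. w c * B (J (unit_fun c) x) (J (unit_fun l) x)) = 0"
      using B_rel[of "J (unit_fun l) x"] \<open>t = 0\<close> by simp
    then have "(\<Sum>c<k. w c * g c l) * B x x = 0"
      using that \<open>k \<le> m\<close>
      by (simp add: B_J_J c_part2 unit_fun_part2 x(1) bil_unit_fun sum_distrib_right mult.assoc)
    then show ?thesis
      using x(2) that \<open>k \<le> m\<close> g_sym
      by (subst B_commute) (simp add: bil_sum_left bil_scale_left bil_unit_fun)
  qed
  moreover have "(\<lambda>i. \<Sum>c<k. w c * unit_fun c i) \<in> part2 m n"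
    using \<open>k \<le> m\<close> by (auto simp: part2_def vecs_def unit_fun_def intro!: sum.neutral)
  ultimately have z0: "(\<lambda>i. \<Sum>c<k. w c * unit_fun c i) = (\<lambda>_. 0)"
    by (intro part2_eq_0_if_orth_unit_funs) (auto simp: B_commute)
  show "\<forall>c<k. w c = 0"
  proof (intro allI impI)
    fix c assume "c < k"
    then show "w c = 0"
      using fun_cong[OF z0, of c] by (simp add: unit_fun_def if_distrib sum.delta' cong: if_cong)
  qed
qed

lemma dim_part2_less_dim_part1:
  assumes "0 < n"
  shows "m < n"
proof (rule ccontr)
  assume "\<not> m < n"
  obtain x where x: "x \<in> part1 m n" "B x x \<noteq> 0"
    using exists_non_isotropic_part1[OF assms] by blast
  define v where "v c = (if c < n then J (unit_fun c) x else x)" for c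
  have "v c \<in> part1 m n" if "c \<le> n" for c
    using J_part1 unit_fun_part2 x(1) \<open>\<not> m < n\<close> that by (auto simp: v_def)
  then obtain w where w: "\<exists>c\<le>n. w c \<noteq> 0" "\<forall>i. (\<Sum>c\<le>n. w c * v c i) = 0"
    using part1_family_dependent by blast
  have "\<forall>i. (\<Sum>c<n. w c * J (unit_fun c) x i) + w n * x i = 0"
    using w(2) by (simp add: lessThan_Suc_atMost[symmetric] v_def)
  from J_unit_funs_independent[OF x _ this] \<open>\<not> m < n\<close> have "w n = 0" "\<forall>c<n. w c = 0"
    by simp_all
  with w(1) show False
    using le_neq_implies_less by blast
qed

lemma bracket_mat_adjugate_relation:
  assumes "1 < m" "0 < n" "det (bracket_mat n a 0) \<noteq> 0"
  obtains \<alpha> \<beta> \<gamma> where "\<alpha> \<noteq> 0"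
    "\<alpha> \<cdot>\<^sub>m adj_sandwich n a + (\<gamma> * det (bracket_mat n a 0)) \<cdot>\<^sub>m bracket_mat n a 0
      = (2 * \<beta> * det (bracket_mat n a 0)) \<cdot>\<^sub>m bracket_mat n a 1"
proof -
  obtain z0 where z0: "z0 \<in> part2 m n" "\<forall>v \<in> vecs m. B z0 v = v 0"
    using exists_dual_part2_vector[of 0] assms(1) by auto
  obtain z1 where z1: "z1 \<in> part2 m n" "\<forall>v \<in> vecs m. B z1 v = v 1"
    using exists_dual_part2_vector[of 1] assms(1) by auto
  have form: "bracket_form_mat z0 = bracket_mat n a 0" "bracket_form_mat z1 = bracket_mat n a 1"
    using bracket_form_mat_dual z0(2) z1(2) assms(1) by auto
  have "J_mat z0 * gram_part1 = bracket_mat n a 0"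
    and "J_mat z0 * bracket_mat n a 0 = (- B z0 z0) \<cdot>\<^sub>m gram_part1"
    and "J_mat z1 * bracket_mat n a 1 = (- B z1 z1) \<cdot>\<^sub>m gram_part1"
    and "J_mat z0 * bracket_mat n a 1 + J_mat z1 * bracket_mat n a 0 = (- 2 * B z0 z1) \<cdot>\<^sub>m gram_part1"
    using J_mat_mult_gram_part1[OF z0(1)] J_mat_mult_bracket_form_mat_self[OF z0(1)]
      J_mat_mult_bracket_form_mat_self[OF z1(1)] J_mat_mult_bracket_form_mat_anticomm[OF z0(1) z1(1)]
    unfolding form by simp_all
  from clifford_adjugate_relation[OF bracket_mat_carrier bracket_mat_carrier gram_part1_carrier
      J_mat_carrier J_mat_carrier assms(2,3) det_gram_part1_nonzero this]
  show ?thesis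
    by (rule that[unfolded adj_sandwich_def])
qed

end

section \<open>The obstruction polynomial\<close>

definition obstruction_minor :: "nat \<Rightarrow> (nat \<times> nat \<times> nat \<Rightarrow> real) \<Rightarrow> real" where
  "obstruction_minor n a = det3
     (adj_sandwich n a $$ (0, 1)) (bracket_mat n a 1 $$ (0, 1)) (bracket_mat n a 0 $$ (0, 1))
     (adj_sandwich n a $$ (2, 3)) (bracket_mat n a 1 $$ (2, 3)) (bracket_mat n a 0 $$ (2, 3))
     (adj_sandwich n a $$ (4, 5)) (bracket_mat n a 1 $$ (4, 5)) (bracket_mat n a 0 $$ (4, 5))"

definition obstruction_poly :: "nat \<Rightarrow> (nat \<times> nat \<times> nat \<Rightarrow> real) \<Rightarrow> real" where
  "obstruction_poly n a = det (bracket_mat n a 0) * obstruction_minor n a"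

lemma poly_mat_bracket_mat:
  assumes "k < m"
  shows "poly_mat (coords m n) n (\<lambda>a. bracket_mat n a k)"
  unfolding poly_mat_def
proof (intro conjI allI impI bracket_mat_carrier)
  fix i j assume ij: "i < n" "j < n"
  consider "i < j" | "j < i" | "i = j"
    by linarith
  then show "poly_fun (coords m n) (\<lambda>a. bracket_mat n a k $$ (i, j))"
  proof cases
    case 1
    with ij assms show ?thesis
      by (simp add: index_bracket_mat coords_def pf_var)
  next
    case 2
    with ij assms show ?thesis
      using poly_fun_scale[OF pf_var, of "(j, i, k)" "coords m n" "- 1"]
      by (simp add: index_bracket_mat coords_def)
  next
    case 3
    with ij show ?thesis
      by (simp add: index_bracket_mat pf_const)
  qed
qed

lemma poly_fun_obstruction_poly:
  assumes "1 < m" "6 \<le> n"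
  shows "poly_fun (coords m n) (obstruction_poly n)"
proof -
  have A: "poly_mat (coords m n) n (\<lambda>a. bracket_mat n a k)" if "k \<le> 1" for k
    using poly_mat_bracket_mat assms(1) that by simp
  have C: "poly_mat (coords m n) n (adj_sandwich n)"
    using poly_mat_mult[OF poly_mat_mult[OF A poly_mat_adj[OF A]] A]
    by (simp add: adj_sandwich_def[abs_def])
  have entry: "poly_fun (coords m n) (\<lambda>a. M a $$ (i, j))"
    if "poly_mat (coords m n) n M" "i < 6" "j < 6" for M i j
    using that assms(2) by (simp add: poly_mat_def)
  have "poly_fun (coords m n) (obstruction_minor n)"
    unfolding obstruction_minor_def by (intro poly_fun_det3 entry A C) simp_all
  then show ?thesis
    unfolding obstruction_poly_def[abs_def] using poly_fun_det[OF A[of 0]] by (intro pf_mult) simp_all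
qed

lemma not_pseudo_H_type_if_obstruction_poly:
  assumes "1 < m" "6 \<le> n" "obstruction_poly n a \<noteq> 0"
  shows "\<not> pseudo_H_type m n a"
proof
  assume "pseudo_H_type m n a"
  then obtain g J where "pseudo_H_structure m n a g J"
    by (rule pseudo_H_typeE)
  then interpret pseudo_H_structure m n a g J .
  let ?A0 = "bracket_mat n a 0" and ?A1 = "bracket_mat n a 1"
  have "det ?A0 \<noteq> 0" and minor: "obstruction_minor n a \<noteq> 0"
    using assms(3) by (auto simp: obstruction_poly_def)
  moreover have "0 < n"
    using assms(2) by simp
  ultimately obtain \<alpha> \<beta> \<gamma> where "\<alpha> \<noteq> 0"
    and rel: "\<alpha> \<cdot>\<^sub>m adj_sandwich n a + (\<gamma> * det ?A0) \<cdot>\<^sub>m ?A0 = (2 * \<beta> * det ?A0) \<cdot>\<^sub>m ?A1"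
    using bracket_mat_adjugate_relation[OF assms(1) \<open>0 < n\<close> \<open>det ?A0 \<noteq> 0\<close>] by blast
  have entry: "\<alpha> * adj_sandwich n a $$ (i, j) + (\<gamma> * det ?A0) * ?A0 $$ (i, j)
      = (2 * \<beta> * det ?A0) * ?A1 $$ (i, j)" if "i < n" "j < n" for i j
    using arg_cong[OF rel, of "\<lambda>M. M $$ (i, j)"] that adj_sandwich_carrier[of n a] by simp
  have "obstruction_minor n a = 0"
    unfolding obstruction_minor_def
    by (rule det3_eq_0_if_combination[OF \<open>\<alpha> \<noteq> 0\<close> entry entry entry]) (use assms(2) in simp_all)
  with minor show False ..
qed

section \<open>An algebra where the obstruction does not vanish\<close>

text \<open>\<open>[e\<^sub>2\<^sub>b, e\<^sub>2\<^sub>b\<^sub>+\<^sub>1] = f\<^sub>0 + b f\<^sub>1\<close>, and all other brackets of basis vectors vanish.\<close>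

definition std_bracket :: "nat \<times> nat \<times> nat \<Rightarrow> real" where
  "std_bracket = (\<lambda>(i, j, k). if j = Suc i \<and> even i then
     (if k = 0 then 1 else if k = 1 then real (i div 2) else 0) else 0)"

definition partner :: "nat \<Rightarrow> nat" where
  "partner i = (if even i then Suc i else i - 1)"

definition parity_sign :: "nat \<Rightarrow> real" where
  "parity_sign i = (if even i then 1 else - 1)"

lemma partner_less: "even n \<Longrightarrow> i < n \<Longrightarrow> partner i < n"
  unfolding partner_def by (auto elim: oddE) (metis Suc_lessI even_Suc)

lemma partner_partner: "partner (partner i) = i"
  unfolding partner_def by (cases i) auto

lemma parity_sign_partner: "parity_sign (partner i) = - parity_sign i"
  unfolding partner_def parity_sign_def by (cases i) auto

lemma index_bracket_mat_std_0:
  "i < n \<Longrightarrow> j < n \<Longrightarrow> bracket_mat n std_bracket 0 $$ (i, j) = parity_sign i * unit_fun (partner i) j"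
  unfolding index_bracket_mat std_bracket_def partner_def parity_sign_def unit_fun_def
  by (auto elim!: oddE evenE)

lemma index_bracket_mat_std_1:
  "i < n \<Longrightarrow> j < n \<Longrightarrow>
    bracket_mat n std_bracket 1 $$ (i, j) = real (i div 2) * parity_sign i * unit_fun (partner i) j"
  unfolding index_bracket_mat std_bracket_def partner_def parity_sign_def unit_fun_def
  by (auto elim!: oddE evenE; presburger)

lemma sum_scaled_unit_fun_mult:
  "finite A \<Longrightarrow> p \<in> A \<Longrightarrow> (\<Sum>l\<in>A. c * unit_fun p l * f l) = c * (f p :: real)"
  by (simp add: mult.assoc sum_distrib_left[symmetric] sum_unit_fun_mult)

lemma index_bracket_mat_std_0_mult:
  assumes "even n" "M \<in> carrier_mat n n" "i < n" "j < n"
  shows "(bracket_mat n std_bracket 0 * M) $$ (i, j) = parity_sign i * M $$ (partner i, j)"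
proof -
  have "(bracket_mat n std_bracket 0 * M) $$ (i, j) = (\<Sum>l<n. parity_sign i * unit_fun (partner i) l * M $$ (l, j))"
    unfolding index_mult_mat_sum[OF bracket_mat_carrier assms(2-4)]
    using assms(3) by (intro sum.cong) (simp_all add: index_bracket_mat_std_0)
  then show ?thesis
    using partner_less[OF assms(1,3)] by (simp add: sum_scaled_unit_fun_mult)
qed

lemma index_bracket_mat_std_1_mult:
  assumes "even n" "M \<in> carrier_mat n n" "i < n" "j < n"
  shows "(bracket_mat n std_bracket 1 * M) $$ (i, j) = real (i div 2) * parity_sign i * M $$ (partner i, j)"
proof -
  have "(bracket_mat n std_bracket 1 * M) $$ (i, j)
      = (\<Sum>l<n. real (i div 2) * parity_sign i * unit_fun (partner i) l * M $$ (l, j))"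
    unfolding index_mult_mat_sum[OF bracket_mat_carrier assms(2-4)]
    using assms(3) index_bracket_mat_std_1[of i n] by (intro sum.cong) simp_all
  then show ?thesis
    using partner_less[OF assms(1,3)] by (simp add: sum_scaled_unit_fun_mult)
qed

lemma bracket_mat_std_0_square:
  assumes "even n"
  shows "bracket_mat n std_bracket 0 * bracket_mat n std_bracket 0 = (- 1) \<cdot>\<^sub>m 1\<^sub>m n"
proof (rule eq_matI)
  fix i j assume "i < dim_row ((- 1) \<cdot>\<^sub>m 1\<^sub>m n :: real mat)" "j < dim_col ((- 1) \<cdot>\<^sub>m 1\<^sub>m n :: real mat)"
  then have ij: "i < n" "j < n"
    by auto
  then show "(bracket_mat n std_bracket 0 * bracket_mat n std_bracket 0) $$ (i, j) = ((- 1) \<cdot>\<^sub>m 1\<^sub>m n) $$ (i, j)"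
    unfolding index_bracket_mat_std_0_mult[OF assms bracket_mat_carrier ij]
    using partner_less[OF assms ij(1)]
    by (simp add: index_bracket_mat_std_0 partner_partner parity_sign_partner unit_fun_def)
      (simp add: parity_sign_def)
qed auto

lemma det_bracket_mat_std_0: "even n \<Longrightarrow> det (bracket_mat n std_bracket 0) ^ 2 = 1"
  using det_mult[OF bracket_mat_carrier bracket_mat_carrier, of n std_bracket 0 std_bracket 0]
  by (simp add: bracket_mat_std_0_square power2_eq_square)

lemma adj_bracket_mat_std_0:
  assumes "even n"
  shows "adj_mat (bracket_mat n std_bracket 0) = (- det (bracket_mat n std_bracket 0)) \<cdot>\<^sub>m bracket_mat n std_bracket 0"
proof -
  let ?A = "bracket_mat n std_bracket 0"
  have A: "?A \<in> carrier_mat n n" and D: "adj_mat ?A \<in> carrier_mat n n"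
    using bracket_mat_carrier adj_mat(1)[OF bracket_mat_carrier] by blast+
  have "(- 1) \<cdot>\<^sub>m adj_mat ?A = adj_mat ?A * (?A * ?A)"
    using D by (simp add: bracket_mat_std_0_square[OF assms] mult_smult_one_mat)
  also have "\<dots> = (adj_mat ?A * ?A) * ?A"
    using A D by simp
  also have "\<dots> = det ?A \<cdot>\<^sub>m ?A"
    using A by (simp add: adj_mat(3)[OF A] smult_one_mat_mult)
  also have "\<dots> = (- 1) \<cdot>\<^sub>m ((- det ?A) \<cdot>\<^sub>m ?A)"
    by (simp add: smult_smult_mat)
  finally show ?thesis
    using smult_mat_cancel[of "- 1"] D A by simp
qed

lemma index_adj_sandwich_std:
  assumes "even n" "i < n" "j < n"
  shows "adj_sandwich n std_bracket $$ (i, j)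
    = det (bracket_mat n std_bracket 0) * real (i div 2) * bracket_mat n std_bracket 1 $$ (i, j)"
proof -
  let ?A0 = "bracket_mat n std_bracket 0" and ?A1 = "bracket_mat n std_bracket 1"
  have "adj_sandwich n std_bracket = (- det ?A0) \<cdot>\<^sub>m (?A1 * (?A0 * ?A1))"
    unfolding adj_sandwich_def adj_bracket_mat_std_0[OF assms(1)]
    using bracket_mat_carrier[of n std_bracket 0] bracket_mat_carrier[of n std_bracket 1]
    by (simp add: mult_smult_distrib[of _ n n _ n] mult_smult_assoc_mat[of _ n n _ n])
  moreover have "(?A1 * (?A0 * ?A1)) $$ (i, j) = - real (i div 2) * ?A1 $$ (i, j)"
    unfolding index_bracket_mat_std_1_mult[OF assms(1) mult_carrier_mat[OF bracket_mat_carrier bracket_mat_carrier] assms(2,3)]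
      index_bracket_mat_std_0_mult[OF assms(1) bracket_mat_carrier partner_less[OF assms(1,2)] assms(3)]
    by (simp add: partner_partner parity_sign_partner) (simp add: parity_sign_def)
  ultimately show ?thesis
    using assms(2,3) by simp
qed

lemma obstruction_poly_std_nonzero:
  assumes "even n" "6 \<le> n"
  shows "obstruction_poly n std_bracket \<noteq> 0"
proof -
  let ?d = "det (bracket_mat n std_bracket 0)"
  have d: "?d \<noteq> 0"
    using det_bracket_mat_std_0[OF assms(1)] by auto
  have "bracket_mat n std_bracket 0 $$ (2 * b, Suc (2 * b)) = 1"
    and "bracket_mat n std_bracket 1 $$ (2 * b, Suc (2 * b)) = real b"
    and "adj_sandwich n std_bracket $$ (2 * b, Suc (2 * b)) = ?d * real b * real b" if "b < 3" for b
    using that assms index_adj_sandwich_std[OF assms(1), of "2 * b" "Suc (2 * b)"]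
      index_bracket_mat_std_1[of "2 * b" n "Suc (2 * b)"]
    by (simp_all add: index_bracket_mat_std_0 partner_def parity_sign_def unit_fun_def)
  from this[of 0] this[of 1] this[of 2] have "obstruction_minor n std_bracket = - 2 * ?d"
    by (simp add: obstruction_minor_def det3_def numeral_eq_Suc)
  with d show ?thesis
    by (simp add: obstruction_poly_def)
qed

lemma not_pseudo_H_type_if_odd_or_small:
  assumes "0 < m" "0 < n" "odd n \<or> n \<le> m"
  shows "\<not> pseudo_H_type m n a"
proof
  assume "pseudo_H_type m n a"
  then obtain g J where "pseudo_H_structure m n a g J"
    by (rule pseudo_H_typeE)
  then interpret pseudo_H_structure m n a g J .
  show False
    using even_dim_part1 dim_part2_less_dim_part1 assms by auto
qed

lemma genericI:
  "poly_fun (coords m n) P \<Longrightarrow> P a0 \<noteq> 0 \<Longrightarrow> (\<And>a. P a \<noteq> 0 \<Longrightarrow> Prop a) \<Longrightarrow> generic m n Prop"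
  unfolding generic_def by blast

theorem theorem6p2:
  fixes m n :: nat
  assumes "m > 1" and "m \<le> n choose 2" and "(m, n) \<notin> {(2, 4), (3, 4)}"
  shows "generic m n (\<lambda>a. \<not> pseudo_H_type m n a)"
proof (cases "odd n \<or> n \<le> m")
  case True
  have "n choose 2 \<noteq> 0"
    using assms(1,2) by linarith
  then have "0 < n"
    by (rule contrapos_np) simp
  with True show ?thesis
    using assms(1) by (intro genericI[where P = "\<lambda>_. 1"] pf_const not_pseudo_H_type_if_odd_or_small) auto
next
  case False
  then have "even n" "m < n"
    by auto
  with assms(1,3) have "6 \<le> n"
    by (auto elim!: evenE)
  then show ?thesis
    using assms(1) \<open>even n\<close> by (intro genericI[OF poly_fun_obstruction_poly obstruction_poly_std_nonzero]
        not_pseudo_H_type_if_obstruction_poly)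
qed

end
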